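(* If $n\ge3$, then $$b_{n,i}=b_{n,i-1}+(p-q)b_{n-1,i}+(r-p)b_{n-1,i-1},\qquad 2\le i\le n-1,$$ with $b_{n,1}=(p-q)b_{n-1,1}+q\sum_{j=1}^{n-1}b_{n-1,j}$ and $b_{n,n}=r\sum_{j=1}^{n-1}b_{n-1,j}$ for $n\ge2$, and $b_{1,1}=1$.
   Context: An inversion sequence of length $n$ is a sequence $\rho=\rho_1\cdots\rho_n$ of integers with $1\le \rho_i\le i$ for all $i$; $I_{n,i}$ is the set of those of length $n$ with last letter $i$. A level, descent, or ascent of $\rho$ is an index $i\in[n-1]$ with $\rho_i=\rho_{i+1}$, $\rho_i>\rho_{i+1}$, or $\rho_i<\rho_{i+1}$, respectively. Let $b_{n,i}=b_{n,i}(p,q,r)=\sum_{\rho\in I_{n,i}}p^{\mathrm{lev}(\rho)}q^{\mathrm{des}(\rho)}r^{\mathrm{asc}(\rho)}$. *)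

theory Defs
  imports Main
begin

text \<open>Inversion sequences of length n, as lists rho with rho!k = rho_(k+1),
  so 1 \<le> rho!k \<le> k+1.\<close>
definition inv_seqs :: "nat \<Rightarrow> nat list set" where
  "inv_seqs n = {xs. length xs = n \<and> (\<forall>k<n. 1 \<le> xs ! k \<and> xs ! k \<le> Suc k)}"

definition I_set :: "nat \<Rightarrow> nat \<Rightarrow> nat list set" where
  "I_set n i = {xs \<in> inv_seqs n. xs \<noteq> [] \<and> last xs = i}"

definition lev :: "nat list \<Rightarrow> nat" where
  "lev xs = card {k. Suc k < length xs \<and> xs ! k = xs ! Suc k}"

definition des :: "nat list \<Rightarrow> nat" where
  "des xs = card {k. Suc k < length xs \<and> xs ! k > xs ! Suc k}"

definition asc :: "nat list \<Rightarrow> nat" where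
  "asc xs = card {k. Suc k < length xs \<and> xs ! k < xs ! Suc k}"

definition b :: "'a::comm_ring_1 \<Rightarrow> 'a \<Rightarrow> 'a \<Rightarrow> nat \<Rightarrow> nat \<Rightarrow> 'a" where
  "b p q r n i = (\<Sum>xs\<in>I_set n i. p ^ lev xs * q ^ des xs * r ^ asc xs)"

end

theory Submission
  imports Defs
begin

text \<open>Appending a letter i to an inversion sequence whose last letter is j creates one new
  level, descent or ascent according as j = i, j > i or j < i, and every sequence in I_{n,i}
  arises this way from a unique sequence of length n - 1. Hence
  b_{n,i} = \<Sum>_j w(j,i) b_{n-1,j} with w(j,i) \<in> {p, q, r}. The boundary formulas are
  immediate, and w(j,i) - w(j,i-1) vanishes unless j \<in> {i-1, i}, which gives the
  three-term recurrence.\<close>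

lemma card_adjacent_snoc:
  fixes P :: "'a \<Rightarrow> 'a \<Rightarrow> bool"
  assumes "xs \<noteq> []"
  shows "card {k. Suc k < length (xs @ [x]) \<and> P ((xs @ [x]) ! k) ((xs @ [x]) ! Suc k)}
       = card {k. Suc k < length xs \<and> P (xs ! k) (xs ! Suc k)} + (if P (last xs) x then 1 else 0)"
proof -
  let ?A = "{k. Suc k < length xs \<and> P (xs ! k) (xs ! Suc k)}"
  have split: "{k. Suc k < length (xs @ [x]) \<and> P ((xs @ [x]) ! k) ((xs @ [x]) ! Suc k)}
      = ?A \<union> (if P (last xs) x then {length xs - 1} else {})"
  proof (rule set_eqI)
    fix k
    show "k \<in> {k. Suc k < length (xs @ [x]) \<and> P ((xs @ [x]) ! k) ((xs @ [x]) ! Suc k)} \<longleftrightarrow>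
          k \<in> ?A \<union> (if P (last xs) x then {length xs - 1} else {})"
    proof (cases "Suc k < length xs")
      case True
      then show ?thesis by (auto simp: nth_append)
    next
      case False
      then show ?thesis
        using assms by (cases "k = length xs - 1") (auto simp: nth_append last_conv_nth)
    qed
  qed
  have "finite ?A"
    by (rule finite_subset[of _ "{..<length xs}"]) auto
  then show ?thesis
    unfolding split by (auto simp: card_insert_if)
qed

lemma lev_snoc: "xs \<noteq> [] \<Longrightarrow> lev (xs @ [x]) = lev xs + (if last xs = x then 1 else 0)"
  unfolding lev_def by (rule card_adjacent_snoc)

lemma des_snoc: "xs \<noteq> [] \<Longrightarrow> des (xs @ [x]) = des xs + (if last xs > x then 1 else 0)"
  unfolding des_def by (rule card_adjacent_snoc)

lemma asc_snoc: "xs \<noteq> [] \<Longrightarrow> asc (xs @ [x]) = asc xs + (if last xs < x then 1 else 0)"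
  unfolding asc_def by (rule card_adjacent_snoc)

definition stat_weight :: "'a::comm_ring_1 \<Rightarrow> 'a \<Rightarrow> 'a \<Rightarrow> nat list \<Rightarrow> 'a" where
  "stat_weight p q r xs = p ^ lev xs * q ^ des xs * r ^ asc xs"

definition step_weight :: "'a::comm_ring_1 \<Rightarrow> 'a \<Rightarrow> 'a \<Rightarrow> nat \<Rightarrow> nat \<Rightarrow> 'a" where
  "step_weight p q r j i = (if j = i then p else if i < j then q else r)"

lemma stat_weight_snoc:
  "xs \<noteq> [] \<Longrightarrow> stat_weight p q r (xs @ [i]) = step_weight p q r (last xs) i * stat_weight p q r xs"
  unfolding stat_weight_def step_weight_def
  by (auto simp: lev_snoc des_snoc asc_snoc algebra_simps)

lemma b_conv_stat_weight: "b p q r n i = (\<Sum>xs\<in>I_set n i. stat_weight p q r xs)"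
  unfolding b_def stat_weight_def ..

lemma finite_inv_seqs: "finite (inv_seqs n)"
  by (rule finite_subset[OF _ finite_lists_length_eq[of "{0..n}" n]])
     (auto simp: inv_seqs_def in_set_conv_nth, metis Suc_leI le_trans)

lemma inv_seqs_not_Nil: "0 < m \<Longrightarrow> xs \<in> inv_seqs m \<Longrightarrow> xs \<noteq> []"
  by (auto simp: inv_seqs_def)

lemma last_inv_seqs: "0 < m \<Longrightarrow> xs \<in> inv_seqs m \<Longrightarrow> last xs \<in> {1..m}"
  by (cases xs rule: rev_cases) (auto simp: inv_seqs_def nth_append dest: spec[of _ "m - 1"])

lemma I_set_Suc_eq_image:
  assumes "1 \<le> i" "i \<le> Suc m"
  shows "I_set (Suc m) i = (\<lambda>xs. xs @ [i]) ` inv_seqs m"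
proof
  show "I_set (Suc m) i \<subseteq> (\<lambda>xs. xs @ [i]) ` inv_seqs m"
  proof
    fix ys assume "ys \<in> I_set (Suc m) i"
    then have "ys \<noteq> []" "last ys = i" "length ys = Suc m"
      and "\<forall>k<Suc m. 1 \<le> ys ! k \<and> ys ! k \<le> Suc k"
      by (auto simp: I_set_def inv_seqs_def)
    then have "ys = butlast ys @ [i]" and "butlast ys \<in> inv_seqs m"
      by (auto simp: inv_seqs_def nth_butlast dest: append_butlast_last_id)
    then show "ys \<in> (\<lambda>xs. xs @ [i]) ` inv_seqs m" by blast
  qed
  show "(\<lambda>xs. xs @ [i]) ` inv_seqs m \<subseteq> I_set (Suc m) i"
    using assms by (auto simp: I_set_def inv_seqs_def nth_append less_Suc_eq)
qed

lemma b_Suc_eq_sum: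
  assumes "0 < m" "1 \<le> i" "i \<le> Suc m"
  shows "b p q r (Suc m) i = (\<Sum>j=1..m. step_weight p q r j i * b p q r m j)"
proof -
  have "b p q r (Suc m) i = (\<Sum>xs\<in>inv_seqs m. stat_weight p q r (xs @ [i]))"
    unfolding b_conv_stat_weight I_set_Suc_eq_image[OF assms(2,3)]
    by (rule sum.reindex_cong[of "\<lambda>xs. xs @ [i]"]) (auto simp: inj_on_def)
  also have "\<dots> = (\<Sum>xs\<in>inv_seqs m. step_weight p q r (last xs) i * stat_weight p q r xs)"
    using inv_seqs_not_Nil[OF assms(1)] by (intro sum.cong) (auto simp: stat_weight_snoc)
  also have "\<dots> = (\<Sum>j=1..m. \<Sum>xs\<in>{xs \<in> inv_seqs m. last xs = j}.
                    step_weight p q r (last xs) i * stat_weight p q r xs)"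
    using finite_inv_seqs last_inv_seqs[OF assms(1)] by (intro sum.group[symmetric]) auto
  also have "\<dots> = (\<Sum>j=1..m. step_weight p q r j i * b p q r m j)"
  proof (rule sum.cong)
    fix j
    have "{xs \<in> inv_seqs m. last xs = j} = I_set m j"
      using inv_seqs_not_Nil[OF assms(1)] by (auto simp: I_set_def)
    then show "(\<Sum>xs\<in>{xs \<in> inv_seqs m. last xs = j}.
                 step_weight p q r (last xs) i * stat_weight p q r xs)
             = step_weight p q r j i * b p q r m j"
      by (simp add: b_conv_stat_weight sum_distrib_left I_set_def)
  qed simp
  finally show ?thesis .
qed

lemma b_Suc_recurrence:
  assumes "2 \<le> i" "i \<le> m"
  shows "b p q r (Suc m) i
       = b p q r (Suc m) (i - 1) + (p - q) * b p q r m i + (r - p) * b p q r m (i - 1)"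
proof -
  let ?w = "step_weight p q r" and ?B = "b p q r m"
  have "b p q r (Suc m) i - b p q r (Suc m) (i - 1)
      = (\<Sum>j=1..m. ?w j i * ?B j) - (\<Sum>j=1..m. ?w j (i - 1) * ?B j)"
    using assms by (simp add: b_Suc_eq_sum)
  also have "\<dots> = (\<Sum>j=1..m. (?w j i - ?w j (i - 1)) * ?B j)"
    by (simp add: sum_subtractf left_diff_distrib)
  also have "\<dots> = (\<Sum>j=1..m. (if j = i then (p - q) * ?B j else 0)
                          + (if j = i - 1 then (r - p) * ?B j else 0))"
    using assms by (intro sum.cong) (auto simp: step_weight_def algebra_simps)
  also have "\<dots> = (p - q) * ?B i + (r - p) * ?B (i - 1)"
    using assms by (simp add: sum.distrib, linarith)
  finally show ?thesis
    by (simp add: algebra_simps)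
qed

lemma b_Suc_1:
  assumes "0 < m"
  shows "b p q r (Suc m) 1 = (p - q) * b p q r m 1 + q * (\<Sum>j=1..m. b p q r m j)"
proof -
  have "b p q r (Suc m) 1 = (\<Sum>j=1..m. step_weight p q r j 1 * b p q r m j)"
    using assms by (simp add: b_Suc_eq_sum)
  also have "\<dots> = (\<Sum>j=1..m. q * b p q r m j + (if j = 1 then (p - q) * b p q r m j else 0))"
    by (intro sum.cong) (auto simp: step_weight_def algebra_simps)
  also have "\<dots> = (p - q) * b p q r m 1 + q * (\<Sum>j=1..m. b p q r m j)"
    using assms by (simp add: sum.distrib sum_distrib_left)
  finally show ?thesis .
qed

lemma b_Suc_Suc:
  assumes "0 < m"
  shows "b p q r (Suc m) (Suc m) = r * (\<Sum>j=1..m. b p q r m j)"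
  using assms by (simp add: b_Suc_eq_sum step_weight_def sum_distrib_left)

lemma b_1_1: "b p q r 1 1 = 1"
proof -
  have "I_set 1 1 = {[1]}"
    by (auto simp: I_set_def inv_seqs_def length_Suc_conv)
  then show ?thesis
    by (simp add: b_def lev_def des_def asc_def)
qed

theorem proposition3p9:
  fixes p q r :: "'a::comm_ring_1"
  shows "(\<forall>n i. 3 \<le> n \<longrightarrow> 2 \<le> i \<longrightarrow> i \<le> n - 1 \<longrightarrow>
            b p q r n i = b p q r n (i - 1) + (p - q) * b p q r (n - 1) i
                          + (r - p) * b p q r (n - 1) (i - 1))
       \<and> (\<forall>n. 2 \<le> n \<longrightarrow>
            b p q r n 1 = (p - q) * b p q r (n - 1) 1 + q * (\<Sum>j=1..n-1. b p q r (n - 1) j))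
       \<and> (\<forall>n. 2 \<le> n \<longrightarrow> b p q r n n = r * (\<Sum>j=1..n-1. b p q r (n - 1) j))
       \<and> b p q r 1 1 = 1"
proof (intro conjI allI impI)
  fix n i :: nat
  assume "3 \<le> n" "2 \<le> i" "i \<le> n - 1"
  moreover obtain m where "n = Suc m"
    using \<open>3 \<le> n\<close> by (cases n) auto
  ultimately show "b p q r n i = b p q r n (i - 1) + (p - q) * b p q r (n - 1) i
                          + (r - p) * b p q r (n - 1) (i - 1)"
    using b_Suc_recurrence[of i m] by simp
next
  fix n :: nat
  assume "2 \<le> n"
  then obtain m where "n = Suc m" "0 < m"
    by (cases n) auto
  then show "b p q r n 1 = (p - q) * b p q r (n - 1) 1 + q * (\<Sum>j=1..n-1. b p q r (n - 1) j)"
    and "b p q r n n = r * (\<Sum>j=1..n-1. b p q r (n - 1) j)"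
    using b_Suc_1[of m] b_Suc_Suc[of m] by simp_all
next
  show "b p q r 1 1 = 1" by (rule b_1_1)
qed

end
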